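(* Let $K<\mathsf{SL}_2(\mathbf{C})$ be finite, $H\trianglelefteq K$, and $\alpha$ an automorphism of $K/H$ with $\alpha^2=\mathrm{id}$. Let $G=G(K,H,\alpha)$. Then the subgroup $H\wr S_2=H^2\rtimes S_2$ of $K\wr S_2$ is normal in $G$ if and only if $\alpha=1$, and the subgroup $H^2$ is always normal in $G$.
   Context: $K\wr S_2=K^2\rtimes S_2$, where $S_2=\{1,s_{12}\}$ swaps the two factors. $G(K,H,\alpha)$ is the subgroup of $K\wr S_2$ generated by $s_{12}$, $H^2$, and all $(k_1,k_2)\in K^2$ with $k_2H=\alpha(k_1H)$. *)

theory Defs
  imports "HOL-Analysis.Analysis" "HOL-Algebra.Algebra"
begin

definition SL2 :: "(complex^2^2) monoid" where
  "SL2 = \<lparr>carrier = {A. det A = 1}, mult = (\<lambda>A B. A ** B), one = mat 1\<rparr>"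

text \<open>The wreath product K wr S_2 = K^2 semidirect S_2. An element (k1,k2,s)
  stands for (k1,k2) s12^s (s = True means the transposition s12), with
  s12 (k1,k2) s12 = (k2,k1).\<close>
definition wreath2 :: "('a,'b) monoid_scheme \<Rightarrow> ('a \<times> 'a \<times> bool) monoid" where
  "wreath2 K = \<lparr>carrier = carrier K \<times> carrier K \<times> UNIV,
     mult = (\<lambda>(a1,a2,s) (b1,b2,t).
        if s then (a1 \<otimes>\<^bsub>K\<^esub> b2, a2 \<otimes>\<^bsub>K\<^esub> b1, s \<noteq> t)
        else (a1 \<otimes>\<^bsub>K\<^esub> b1, a2 \<otimes>\<^bsub>K\<^esub> b2, s \<noteq> t)),
     one = (\<one>\<^bsub>K\<^esub>, \<one>\<^bsub>K\<^esub>, False)\<rparr>"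

text \<open>G(K,H,alpha): subgroup of K wr S_2 generated by s12, H^2 and all (k1,k2)
  with k2 H = alpha(k1 H). Cosets are the elements of K Mod H (right cosets,
  equal to left cosets as H is normal).\<close>
definition GKHa :: "('a,'b) monoid_scheme \<Rightarrow> 'a set \<Rightarrow> ('a set \<Rightarrow> 'a set) \<Rightarrow> ('a \<times> 'a \<times> bool) set" where
  "GKHa K H \<alpha> = generate (wreath2 K)
     ({(\<one>\<^bsub>K\<^esub>, \<one>\<^bsub>K\<^esub>, True)} \<union> (H \<times> H \<times> {False}) \<union>
      {(k1, k2, False) | k1 k2. k1 \<in> carrier K \<and> k2 \<in> carrier K \<and>
          H #>\<^bsub>K\<^esub> k2 = \<alpha> (H #>\<^bsub>K\<^esub> k1)})"

end

theory Submission
  imports Defs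
begin

text \<open>
  The group \<open>G(K,H,\<alpha>)\<close> is exactly the set of elements \<open>(k\<^sub>1,k\<^sub>2) s\<^sub>1\<^sub>2\<^sup>\<epsilon>\<close> of
  \<open>K \<wr> S\<^sub>2\<close> with \<open>k\<^sub>2H = \<alpha>(k\<^sub>1H)\<close>: this set contains the generators, and it is a
  subgroup because \<open>\<alpha>\<close> is a homomorphism and, being an involution, makes the condition
  symmetric in \<open>k\<^sub>1, k\<^sub>2\<close>, which takes care of the swap.
  Conjugating \<open>s\<^sub>1\<^sub>2\<close> by \<open>(k\<^sub>1,k\<^sub>2)\<close> gives \<open>(k\<^sub>1k\<^sub>2\<^sup>-\<^sup>1, k\<^sub>2k\<^sub>1\<^sup>-\<^sup>1) s\<^sub>1\<^sub>2\<close>, which lies in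
  \<open>H \<wr> S\<^sub>2\<close> only if \<open>k\<^sub>1H = k\<^sub>2H = \<alpha>(k\<^sub>1H)\<close>; so normality of \<open>H \<wr> S\<^sub>2\<close> forces \<open>\<alpha> = 1\<close>.
  Conversely, conjugating any element of \<open>H \<wr> S\<^sub>2\<close> by an element of \<open>G\<close> produces
  coordinates \<open>k\<^sub>i h k\<^sub>j\<^sup>-\<^sup>1\<close>, which lie in \<open>H\<close> when \<open>k\<^sub>iH = k\<^sub>jH\<close>, and for \<open>H\<^sup>2\<close> only
  \<open>i = j\<close> occurs, so \<open>H\<^sup>2\<close> is normal because \<open>H\<close> is.
\<close>

lemma carrier_wreath2 [simp]: "carrier (wreath2 K) = carrier K \<times> carrier K \<times> UNIV"
  by (simp add: wreath2_def)

lemma one_wreath2 [simp]: "\<one>\<^bsub>wreath2 K\<^esub> = (\<one>\<^bsub>K\<^esub>, \<one>\<^bsub>K\<^esub>, False)"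
  by (simp add: wreath2_def)

lemma mult_wreath2 [simp]:
  "(a1, a2, s) \<otimes>\<^bsub>wreath2 K\<^esub> (b1, b2, t) =
     (if s then (a1 \<otimes>\<^bsub>K\<^esub> b2, a2 \<otimes>\<^bsub>K\<^esub> b1, s \<noteq> t)
      else (a1 \<otimes>\<^bsub>K\<^esub> b1, a2 \<otimes>\<^bsub>K\<^esub> b2, s \<noteq> t))"
  by (simp add: wreath2_def)

lemma (in group) group_wreath2: "group (wreath2 G)"
proof (rule groupI)
  fix x assume "x \<in> carrier (wreath2 G)"
  then obtain a1 a2 s where x: "x = (a1, a2, s)" "a1 \<in> carrier G" "a2 \<in> carrier G"
    by auto
  let ?y = "if s then (inv a2, inv a1, True) else (inv a1, inv a2, False)"
  have "?y \<in> carrier (wreath2 G) \<and> ?y \<otimes>\<^bsub>wreath2 G\<^esub> x = \<one>\<^bsub>wreath2 G\<^esub>"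
    using x by auto
  then show "\<exists>y\<in>carrier (wreath2 G). y \<otimes>\<^bsub>wreath2 G\<^esub> x = \<one>\<^bsub>wreath2 G\<^esub>" by blast
qed (auto simp: m_assoc)

lemma (in group) inv_wreath2:
  assumes "a1 \<in> carrier G" "a2 \<in> carrier G"
  shows "inv\<^bsub>wreath2 G\<^esub> (a1, a2, s) =
           (if s then (inv a2, inv a1, True) else (inv a1, inv a2, False))"
proof -
  interpret W: group "wreath2 G" by (rule group_wreath2)
  show ?thesis
    by (rule W.inv_equality) (use assms in auto)
qed

lemma (in subgroup) subgroup_wreath2:
  assumes "group G" and "S \<noteq> {}" and "\<And>s t. s \<in> S \<Longrightarrow> t \<in> S \<Longrightarrow> (s \<noteq> t) \<in> S"
  shows "subgroup (H \<times> H \<times> S) (wreath2 G)"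
proof -
  interpret G: group G by fact
  interpret W: group "wreath2 G" by (rule G.group_wreath2)
  show ?thesis
  proof (rule W.subgroupI)
    show "H \<times> H \<times> S \<subseteq> carrier (wreath2 G)" using subset by auto
    from \<open>S \<noteq> {}\<close> obtain s where "s \<in> S" by blast
    then have "(\<one>, \<one>, s) \<in> H \<times> H \<times> S" by simp
    then show "H \<times> H \<times> S \<noteq> {}" by blast
  next
    fix x assume "x \<in> H \<times> H \<times> S"
    then obtain a1 a2 s where "x = (a1, a2, s)" "a1 \<in> H" "a2 \<in> H" "s \<in> S"
      by auto
    then show "inv\<^bsub>wreath2 G\<^esub> x \<in> H \<times> H \<times> S"
      by (cases s) (simp_all add: G.inv_wreath2 mem_carrier)
  next
    fix x y assume "x \<in> H \<times> H \<times> S" "y \<in> H \<times> H \<times> S"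
    then obtain a1 a2 s b1 b2 t where "x = (a1, a2, s)" "y = (b1, b2, t)"
      and "a1 \<in> H" "a2 \<in> H" "b1 \<in> H" "b2 \<in> H" "s \<in> S" "t \<in> S"
      by auto
    moreover from \<open>s \<in> S\<close> \<open>t \<in> S\<close> have "(s \<noteq> t) \<in> S" by (rule assms(3))
    ultimately show "x \<otimes>\<^bsub>wreath2 G\<^esub> y \<in> H \<times> H \<times> S"
      by (cases s) simp_all
  qed
qed

lemma (in group) normal_in_subgroup_iff:
  assumes "subgroup D G" and "N \<subseteq> D" and "subgroup N G"
  shows "N \<lhd> G\<lparr>carrier := D\<rparr> \<longleftrightarrow> (\<forall>x\<in>D. \<forall>h\<in>N. x \<otimes> h \<otimes> inv x \<in> N)"
proof -
  interpret D: group "G\<lparr>carrier := D\<rparr>" by (rule subgroup.subgroup_is_group) (use assms is_group in auto)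
  have "subgroup N (G\<lparr>carrier := D\<rparr>)" using subgroup_incl assms by blast
  then show ?thesis
    unfolding D.normal_inv_iff using m_inv_consistent[OF assms(1)] by auto
qed

lemma (in normal) rcos_eq_iff:
  assumes "a \<in> carrier G" "b \<in> carrier G"
  shows "H #> a = H #> b \<longleftrightarrow> a \<otimes> inv b \<in> H"
  using assms rcos_module[OF is_group] repr_independence[OF _ _ subgroup_axioms]
    rcos_self[OF _ subgroup_axioms] by metis

lemma (in normal) rcos_in_quotient: "a \<in> carrier G \<Longrightarrow> H #> a \<in> carrier (G Mod H)"
  by (simp add: FactGroup_def rcosetsI subset)

lemma (in normal) rcos_of_mem: "h \<in> H \<Longrightarrow> H #> h = H"
  by (rule rcos_const[OF is_group])

lemma (in normal) conj_mem_of_rcos_eq: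
  assumes a: "a \<in> carrier G" and b: "b \<in> carrier G" and ab: "H #> a = H #> b" and h: "h \<in> H"
  shows "a \<otimes> h \<otimes> inv b \<in> H"
proof -
  have "inv a \<otimes> (a \<otimes> inv b) = inv b"
    using a b by (simp flip: m_assoc)
  then have "a \<otimes> h \<otimes> inv b = (a \<otimes> h \<otimes> inv a) \<otimes> (a \<otimes> inv b)"
    using a b h by (simp add: m_assoc mem_carrier)
  also have "\<dots> \<in> H"
    using inv_op_closed2[OF a h] ab a b by (simp add: rcos_eq_iff)
  finally show ?thesis .
qed

lemma (in normal) normal_wreath2_base: "(H \<times> H \<times> {False}) \<lhd> wreath2 G"
proof -
  interpret W: group "wreath2 G" by (rule group_wreath2)
  have "subgroup (H \<times> H \<times> {False}) (wreath2 G)"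
    by (rule subgroup_wreath2) (auto intro: is_group)
  then show ?thesis
    unfolding W.normal_inv_iff
    by (auto simp: inv_wreath2 mem_carrier inv_op_closed2)
qed

lemma (in normal) conj_wreath2_mem:
  assumes k: "k1 \<in> carrier G" "k2 \<in> carrier G" "H #> k1 = H #> k2"
    and h: "h1 \<in> H" "h2 \<in> H"
  shows "(k1, k2, s) \<otimes>\<^bsub>wreath2 G\<^esub> (h1, h2, t) \<otimes>\<^bsub>wreath2 G\<^esub> inv\<^bsub>wreath2 G\<^esub> (k1, k2, s)
           \<in> H \<times> H \<times> UNIV"
proof -
  have "ki \<otimes> h \<otimes> inv kj \<in> H" if "ki \<in> {k1, k2}" "kj \<in> {k1, k2}" "h \<in> {h1, h2}" for ki kj h
    using that k h conj_mem_of_rcos_eq by auto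
  then show ?thesis
    using k by (cases s; cases t) (simp_all add: inv_wreath2)
qed

lemma (in normal) rcos_eq_of_conj_swap:
  assumes k: "k1 \<in> carrier G" "k2 \<in> carrier G"
    and conj: "(k1, k2, False) \<otimes>\<^bsub>wreath2 G\<^esub> (\<one>, \<one>, True) \<otimes>\<^bsub>wreath2 G\<^esub>
                 inv\<^bsub>wreath2 G\<^esub> (k1, k2, False) \<in> H \<times> H \<times> UNIV"
  shows "H #> k1 = H #> k2"
proof -
  from conj have "k1 \<otimes> inv k2 \<in> H"
    using k by (simp add: inv_wreath2)
  then show ?thesis
    using k by (simp add: rcos_eq_iff)
qed

definition coset_graph :: "('a, 'b) monoid_scheme \<Rightarrow> 'a set \<Rightarrow> ('a set \<Rightarrow> 'a set) \<Rightarrow> ('a \<times> 'a \<times> bool) set"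
  where "coset_graph K H \<alpha> =
    {(k1, k2, s). k1 \<in> carrier K \<and> k2 \<in> carrier K \<and> H #>\<^bsub>K\<^esub> k2 = \<alpha> (H #>\<^bsub>K\<^esub> k1)}"

locale quotient_involution = normal H K for H and K (structure) +
  fixes \<alpha>
  assumes hom: "\<alpha> \<in> hom (K Mod H) (K Mod H)"
    and involutive: "\<forall>x\<in>carrier (K Mod H). \<alpha> (\<alpha> x) = x"
begin

sublocale quotient: group_hom "K Mod H" "K Mod H" \<alpha>
  by (simp add: group_hom_axioms_def group_hom_def factorgroup_is_group hom)

lemma alpha_rcos_mult:
  assumes "a \<in> carrier K" "b \<in> carrier K"
  shows "\<alpha> ((H #> a) <#> (H #> b)) = \<alpha> (H #> a) <#> \<alpha> (H #> b)"
  using quotient.hom_mult[OF rcos_in_quotient rcos_in_quotient] assms by simp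

lemma alpha_rcos_inv:
  assumes "a \<in> carrier K"
  shows "\<alpha> (set_inv (H #> a)) = set_inv (\<alpha> (H #> a))"
  using quotient.hom_inv[OF rcos_in_quotient] assms
  by (simp add: inv_FactGroup rcos_in_quotient)

lemma alpha_subgroup: "\<alpha> H = H"
  using quotient.hom_one by simp

lemma coset_graph_swap:
  assumes "(k1, k2, s) \<in> coset_graph K H \<alpha>"
  shows "(k2, k1, t) \<in> coset_graph K H \<alpha>"
  using assms involutive rcos_in_quotient by (auto simp: coset_graph_def)

lemma subgroup_coset_graph: "subgroup (coset_graph K H \<alpha>) (wreath2 K)"
proof -
  interpret W: group "wreath2 K" by (rule group_wreath2)
  show ?thesis
  proof (rule W.subgroupI)
    show "coset_graph K H \<alpha> \<subseteq> carrier (wreath2 K)" by (auto simp: coset_graph_def)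
    have "(\<one>, \<one>, False) \<in> coset_graph K H \<alpha>"
      by (simp add: coset_graph_def alpha_subgroup rcos_of_mem)
    then show "coset_graph K H \<alpha> \<noteq> {}" by blast
  next
    fix x assume "x \<in> coset_graph K H \<alpha>"
    then obtain a1 a2 s where x: "x = (a1, a2, s)" "a1 \<in> carrier K" "a2 \<in> carrier K"
      and a: "H #> a2 = \<alpha> (H #> a1)"
      by (auto simp: coset_graph_def)
    have "H #> inv a2 = set_inv (\<alpha> (H #> a1))"
      using x a by (simp flip: rcos_inv)
    also have "\<dots> = \<alpha> (H #> inv a1)"
      using x by (simp flip: alpha_rcos_inv rcos_inv)
    finally have "(inv a1, inv a2, s) \<in> coset_graph K H \<alpha>"
      using x by (simp add: coset_graph_def)
    then show "inv\<^bsub>wreath2 K\<^esub> x \<in> coset_graph K H \<alpha>"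
      using x by (auto simp: inv_wreath2 intro: coset_graph_swap)
  next
    fix x y assume "x \<in> coset_graph K H \<alpha>" "y \<in> coset_graph K H \<alpha>"
    then obtain a1 a2 s b1 b2 t where x: "x = (a1, a2, s)" "(a1, a2, s) \<in> coset_graph K H \<alpha>"
      and y: "y = (b1, b2, t)" "(b1, b2, t) \<in> coset_graph K H \<alpha>"
      by (cases x, cases y) auto
    have mult: "(a1 \<otimes> c1, a2 \<otimes> c2, u) \<in> coset_graph K H \<alpha>"
      if "(c1, c2, t') \<in> coset_graph K H \<alpha>" for c1 c2 t' u
      using x(2) that by (simp add: coset_graph_def alpha_rcos_mult flip: rcos_sum)
    show "x \<otimes>\<^bsub>wreath2 K\<^esub> y \<in> coset_graph K H \<alpha>"
      using x(1) y mult mult[OF coset_graph_swap] by auto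
  qed
qed

lemma GKHa_eq_coset_graph: "GKHa K H \<alpha> = coset_graph K H \<alpha>"
proof
  interpret W: group "wreath2 K" by (rule group_wreath2)
  show "GKHa K H \<alpha> \<subseteq> coset_graph K H \<alpha>"
    unfolding GKHa_def
    by (rule W.generate_subgroup_incl[OF _ subgroup_coset_graph])
      (auto simp: coset_graph_def alpha_subgroup rcos_of_mem mem_carrier)
  show "coset_graph K H \<alpha> \<subseteq> GKHa K H \<alpha>"
  proof
    fix x assume "x \<in> coset_graph K H \<alpha>"
    then obtain a1 a2 s where x: "x = (a1, a2, s)"
      and a: "a1 \<in> carrier K" "a2 \<in> carrier K" "H #> a2 = \<alpha> (H #> a1)"
      by (auto simp: coset_graph_def)
    then have unswapped: "(a1, a2, False) \<in> GKHa K H \<alpha>"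
      unfolding GKHa_def by (intro generate.incl) blast
    have "(\<one>, \<one>, True) \<in> GKHa K H \<alpha>"
      unfolding GKHa_def by (auto intro: generate.incl)
    with unswapped have "(a1, a2, False) \<otimes>\<^bsub>wreath2 K\<^esub> (\<one>, \<one>, True) \<in> GKHa K H \<alpha>"
      unfolding GKHa_def by (rule generate.eng)
    with unswapped show "x \<in> GKHa K H \<alpha>"
      using x a by (cases s) auto
  qed
qed

lemma wreath_subset_coset_graph: "H \<times> H \<times> UNIV \<subseteq> coset_graph K H \<alpha>"
  by (auto simp: coset_graph_def alpha_subgroup rcos_of_mem mem_carrier)

lemma normal_base_in_coset_graph:
  "(H \<times> H \<times> {False}) \<lhd> (wreath2 K)\<lparr>carrier := coset_graph K H \<alpha>\<rparr>"
  using wreath_subset_coset_graph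
  by (intro group.normal_restrict_supergroup[OF group_wreath2 subgroup_coset_graph normal_wreath2_base])
    blast

lemma normal_wreath_in_coset_graph_iff:
  "(H \<times> H \<times> UNIV) \<lhd> (wreath2 K)\<lparr>carrier := coset_graph K H \<alpha>\<rparr>
     \<longleftrightarrow> (\<forall>C\<in>carrier (K Mod H). \<alpha> C = C)"
proof -
  have "subgroup (H \<times> H \<times> UNIV) (wreath2 K)"
    by (rule subgroup_wreath2) (auto intro: is_group)
  with wreath_subset_coset_graph have normal_iff: "(H \<times> H \<times> UNIV) \<lhd> (wreath2 K)\<lparr>carrier := coset_graph K H \<alpha>\<rparr>
      \<longleftrightarrow> (\<forall>x\<in>coset_graph K H \<alpha>. \<forall>h\<in>H \<times> H \<times> UNIV.
             x \<otimes>\<^bsub>wreath2 K\<^esub> h \<otimes>\<^bsub>wreath2 K\<^esub> inv\<^bsub>wreath2 K\<^esub> x \<in> H \<times> H \<times> UNIV)"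
    by (intro group.normal_in_subgroup_iff[OF group_wreath2 subgroup_coset_graph])
  show ?thesis
  proof
    assume "(H \<times> H \<times> UNIV) \<lhd> (wreath2 K)\<lparr>carrier := coset_graph K H \<alpha>\<rparr>"
    then have conj_closed: "\<forall>x\<in>coset_graph K H \<alpha>. \<forall>h\<in>H \<times> H \<times> UNIV.
        x \<otimes>\<^bsub>wreath2 K\<^esub> h \<otimes>\<^bsub>wreath2 K\<^esub> inv\<^bsub>wreath2 K\<^esub> x \<in> H \<times> H \<times> UNIV"
      using normal_iff by blast
    show "\<forall>C\<in>carrier (K Mod H). \<alpha> C = C"
    proof
      fix C assume C: "C \<in> carrier (K Mod H)"
      then obtain k1 where k1: "k1 \<in> carrier K" "C = H #> k1"
        by (auto simp: FactGroup_def RCOSETS_def)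
      obtain k2 where k2: "k2 \<in> carrier K" "\<alpha> C = H #> k2"
        using quotient.hom_closed[OF C] by (auto simp: FactGroup_def RCOSETS_def)
      have "(k1, k2, False) \<in> coset_graph K H \<alpha>"
        using k1 k2 by (simp add: coset_graph_def)
      moreover have "(\<one>, \<one>, True) \<in> H \<times> H \<times> UNIV"
        by simp
      ultimately have "H #> k1 = H #> k2"
        using k1 k2 by (intro rcos_eq_of_conj_swap conj_closed[rule_format])
      then show "\<alpha> C = C"
        using k1 k2 by simp
    qed
  next
    assume trivial: "\<forall>C\<in>carrier (K Mod H). \<alpha> C = C"
    have "x \<otimes>\<^bsub>wreath2 K\<^esub> h \<otimes>\<^bsub>wreath2 K\<^esub> inv\<^bsub>wreath2 K\<^esub> x \<in> H \<times> H \<times> UNIV"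
      if x_in: "x \<in> coset_graph K H \<alpha>" and h_in: "h \<in> H \<times> H \<times> UNIV" for x h
    proof -
      obtain k1 k2 s h1 h2 t where x: "x = (k1, k2, s)" "k1 \<in> carrier K" "k2 \<in> carrier K"
        "H #> k2 = \<alpha> (H #> k1)" and h: "h = (h1, h2, t)" "h1 \<in> H" "h2 \<in> H"
        using x_in h_in by (auto simp: coset_graph_def)
      moreover have "H #> k1 = H #> k2"
        using x trivial rcos_in_quotient by simp
      ultimately show ?thesis
        using conj_wreath2_mem by simp
    qed
    then show "(H \<times> H \<times> UNIV) \<lhd> (wreath2 K)\<lparr>carrier := coset_graph K H \<alpha>\<rparr>"
      using normal_iff by blast
  qed
qed

end

theorem lemma4p1:
  fixes K H :: "(complex^2^2) set" and \<alpha> :: "(complex^2^2) set \<Rightarrow> (complex^2^2) set"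
  assumes "subgroup K SL2" and "finite K"
    and "H \<lhd> SL2\<lparr>carrier := K\<rparr>"
    and "\<alpha> \<in> iso (SL2\<lparr>carrier := K\<rparr> Mod H) (SL2\<lparr>carrier := K\<rparr> Mod H)"
    and "\<forall>x \<in> carrier (SL2\<lparr>carrier := K\<rparr> Mod H). \<alpha> (\<alpha> x) = x"
  shows "((H \<times> H \<times> UNIV) \<lhd> (wreath2 (SL2\<lparr>carrier := K\<rparr>))\<lparr>carrier := GKHa (SL2\<lparr>carrier := K\<rparr>) H \<alpha>\<rparr>
            \<longleftrightarrow> (\<forall>x \<in> carrier (SL2\<lparr>carrier := K\<rparr> Mod H). \<alpha> x = x))
       \<and> (H \<times> H \<times> {False}) \<lhd> (wreath2 (SL2\<lparr>carrier := K\<rparr>))\<lparr>carrier := GKHa (SL2\<lparr>carrier := K\<rparr>) H \<alpha>\<rparr>"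
proof -
  interpret quotient_involution H "SL2\<lparr>carrier := K\<rparr>" \<alpha>
    using assms(3-5) by (simp add: quotient_involution_def quotient_involution_axioms_def iso_def)
  show ?thesis
    using normal_wreath_in_coset_graph_iff normal_base_in_coset_graph
    by (simp add: GKHa_eq_coset_graph)
qed

end
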